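(* Let $\Omega=\Omega_0\cup\Omega_1$ be an at most unary topological signature and let $X$ be an arbitrary topological space. Then the Polish representation $\Phi_X:\overline{\Omega}_X\mathsf{Fin}_\Omega\to S_{\mathsf M}$ is an isomorphism of topological algebras.
   Context: $\Omega=\biguplus_n\Omega_n$ is a topological signature with $\Omega_n=\emptyset$ for $n\ge2$. A topological $\Omega$-algebra has continuous evaluation maps $\Omega_n\times A^n\to A$. $\mathsf{Fin}_\Omega$ is the class of finite discrete topological $\Omega$-algebras; $\overline{\Omega}_X\mathsf{Fin}_\Omega$ is the free profinite $\Omega$-algebra over the space $X$: a profinite $\Omega$-algebra with a continuous map $\iota:X\to\overline{\Omega}_X\mathsf{Fin}_\Omega$ whose image generates a dense subalgebra, such that every continuous map from $X$ into a member of $\mathsf{Fin}_\Omega$ extends uniquely through $\iota$ to a continuous homomorphism. Let $X\cup\Omega$ be the topological disjoint union of $X$ and the spaces $\Omega_n$, and $\overline{\Omega}_{X\cup\Omega}\mathsf M$ the free profinite monoid over this space (a profinite monoid with continuous map $\eta$ from $X\cup\Omega$ whose image generates a dense submonoid, universal for continuous maps into finite discrete monoids). It is an $\Omega$-algebra via $E_n(w,u_1,\dots,u_n)=\eta(w)u_1\cdots u_n$, and $S_{\mathsf M}$ is the closed $\Omega$-subalgebra generated by $\eta(X)$. The Polish representation $\Phi_X$ is the unique continuous $\Omega$-homomorphism $\overline{\Omega}_X\mathsf{Fin}_\Omega\to S_{\mathsf M}$ with $\Phi_X\circ\iota=\eta|_X$. *)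

theory Defs
  imports "HOL-Analysis.Analysis"
begin

lemma istopology_disjoint_union2:
  "istopology (\<lambda>U. U \<subseteq> Inl ` topspace X \<union> Inr ` topspace Y
                  \<and> openin X (Inl -` U) \<and> openin Y (Inr -` U))"
  unfolding istopology_def
  by (intro conjI allI impI) (auto simp: vimage_Union intro!: openin_Union)

definition disjoint_union_topology :: "'a topology \<Rightarrow> 'b topology \<Rightarrow> ('a + 'b) topology" where
  "disjoint_union_topology X Y = topology (\<lambda>U. U \<subseteq> Inl ` topspace X \<union> Inr ` topspace Y
                  \<and> openin X (Inl -` U) \<and> openin Y (Inr -` U))"

text \<open>The signature: T0 is the space Omega_0 of constant symbols, T1 the space Omega_1
 of unary symbols (Omega_n is empty for n >= 2).\<close>

definition top_alg :: "'c topology \<Rightarrow> 'u topology \<Rightarrow> 'a topology \<Rightarrow> ('c \<Rightarrow> 'a) \<Rightarrow> ('u \<Rightarrow> 'a \<Rightarrow> 'a) \<Rightarrow> bool" where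
  "top_alg T0 T1 A c f \<longleftrightarrow>
     continuous_map T0 A c \<and> continuous_map (prod_topology T1 A) A (\<lambda>(w, a). f w a)"

definition alg_hom :: "'c topology \<Rightarrow> 'u topology \<Rightarrow>
     'a topology \<Rightarrow> ('c \<Rightarrow> 'a) \<Rightarrow> ('u \<Rightarrow> 'a \<Rightarrow> 'a) \<Rightarrow>
     'b topology \<Rightarrow> ('c \<Rightarrow> 'b) \<Rightarrow> ('u \<Rightarrow> 'b \<Rightarrow> 'b) \<Rightarrow> ('a \<Rightarrow> 'b) \<Rightarrow> bool" where
  "alg_hom T0 T1 A c f B d g h \<longleftrightarrow>
     (\<forall>a\<in>topspace A. h a \<in> topspace B) \<and>
     (\<forall>w\<in>topspace T0. h (c w) = d w) \<and>
     (\<forall>w\<in>topspace T1. \<forall>a\<in>topspace A. h (f w a) = g w (h a))"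

definition top_alg_iso :: "'c topology \<Rightarrow> 'u topology \<Rightarrow>
     'a topology \<Rightarrow> ('c \<Rightarrow> 'a) \<Rightarrow> ('u \<Rightarrow> 'a \<Rightarrow> 'a) \<Rightarrow>
     'b topology \<Rightarrow> ('c \<Rightarrow> 'b) \<Rightarrow> ('u \<Rightarrow> 'b \<Rightarrow> 'b) \<Rightarrow> ('a \<Rightarrow> 'b) \<Rightarrow> bool" where
  "top_alg_iso T0 T1 A c f B d g h \<longleftrightarrow>
     alg_hom T0 T1 A c f B d g h \<and> homeomorphic_map A B h"

text \<open>Members of Fin_Omega: finite discrete topological algebras. Every finite algebra is
 isomorphic to one whose carrier is a subset of nat, so we take carriers in nat.\<close>
definition fin_alg :: "'c topology \<Rightarrow> 'u topology \<Rightarrow> nat set \<Rightarrow> ('c \<Rightarrow> nat) \<Rightarrow> ('u \<Rightarrow> nat \<Rightarrow> nat) \<Rightarrow> bool" where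
  "fin_alg T0 T1 K d g \<longleftrightarrow> finite K \<and> top_alg T0 T1 (discrete_topology K) d g"

definition profinite_alg :: "'c topology \<Rightarrow> 'u topology \<Rightarrow> 'a topology \<Rightarrow> ('c \<Rightarrow> 'a) \<Rightarrow> ('u \<Rightarrow> 'a \<Rightarrow> 'a) \<Rightarrow> bool" where
  "profinite_alg T0 T1 A c f \<longleftrightarrow>
     top_alg T0 T1 A c f \<and> compact_space A \<and>
     (\<forall>x\<in>topspace A. \<forall>y\<in>topspace A. x \<noteq> y \<longrightarrow>
        (\<exists>K d g h. fin_alg T0 T1 K d g \<and> continuous_map A (discrete_topology K) h \<and>
                   alg_hom T0 T1 A c f (discrete_topology K) d g h \<and> h x \<noteq> h y))"

definition subalg_gen :: "'c topology \<Rightarrow> 'u topology \<Rightarrow> 'a topology \<Rightarrow> ('c \<Rightarrow> 'a) \<Rightarrow> ('u \<Rightarrow> 'a \<Rightarrow> 'a) \<Rightarrow> 'a set \<Rightarrow> 'a set" where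
  "subalg_gen T0 T1 A c f G = \<Inter>{S. S \<subseteq> topspace A \<and> G \<subseteq> S \<and>
        (\<forall>w\<in>topspace T0. c w \<in> S) \<and> (\<forall>w\<in>topspace T1. \<forall>a\<in>S. f w a \<in> S)}"

definition free_profinite_alg :: "'c topology \<Rightarrow> 'u topology \<Rightarrow> 'x topology \<Rightarrow>
     'a topology \<Rightarrow> ('c \<Rightarrow> 'a) \<Rightarrow> ('u \<Rightarrow> 'a \<Rightarrow> 'a) \<Rightarrow> ('x \<Rightarrow> 'a) \<Rightarrow> bool" where
  "free_profinite_alg T0 T1 X A c f \<iota> \<longleftrightarrow>
     profinite_alg T0 T1 A c f \<and> continuous_map X A \<iota> \<and>
     A closure_of (subalg_gen T0 T1 A c f (\<iota> ` topspace X)) = topspace A \<and>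
     (\<forall>K d g \<phi>. fin_alg T0 T1 K d g \<and> continuous_map X (discrete_topology K) \<phi> \<longrightarrow>
        (\<exists>\<psi>. continuous_map A (discrete_topology K) \<psi> \<and>
              alg_hom T0 T1 A c f (discrete_topology K) d g \<psi> \<and>
              (\<forall>x\<in>topspace X. \<psi> (\<iota> x) = \<phi> x) \<and>
              (\<forall>\<psi>'. continuous_map A (discrete_topology K) \<psi>' \<and>
                     alg_hom T0 T1 A c f (discrete_topology K) d g \<psi>' \<and>
                     (\<forall>x\<in>topspace X. \<psi>' (\<iota> x) = \<phi> x) \<longrightarrow>
                     (\<forall>a\<in>topspace A. \<psi>' a = \<psi> a))))"

definition top_monoid :: "'m topology \<Rightarrow> ('m \<Rightarrow> 'm \<Rightarrow> 'm) \<Rightarrow> 'm \<Rightarrow> bool" where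
  "top_monoid M m e \<longleftrightarrow>
     e \<in> topspace M \<and> continuous_map (prod_topology M M) M (\<lambda>(a, b). m a b) \<and>
     (\<forall>a\<in>topspace M. \<forall>b\<in>topspace M. \<forall>c\<in>topspace M. m (m a b) c = m a (m b c)) \<and>
     (\<forall>a\<in>topspace M. m e a = a \<and> m a e = a)"

definition mon_hom :: "'m topology \<Rightarrow> ('m \<Rightarrow> 'm \<Rightarrow> 'm) \<Rightarrow> 'm \<Rightarrow>
     'n topology \<Rightarrow> ('n \<Rightarrow> 'n \<Rightarrow> 'n) \<Rightarrow> 'n \<Rightarrow> ('m \<Rightarrow> 'n) \<Rightarrow> bool" where
  "mon_hom M m e N n u h \<longleftrightarrow>
     (\<forall>a\<in>topspace M. h a \<in> topspace N) \<and> h e = u \<and>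
     (\<forall>a\<in>topspace M. \<forall>b\<in>topspace M. h (m a b) = n (h a) (h b))"

text \<open>Finite discrete monoids (carriers in nat, up to isomorphism).\<close>
definition fin_monoid :: "nat set \<Rightarrow> (nat \<Rightarrow> nat \<Rightarrow> nat) \<Rightarrow> nat \<Rightarrow> bool" where
  "fin_monoid K n u \<longleftrightarrow> finite K \<and> top_monoid (discrete_topology K) n u"

definition profinite_monoid :: "'m topology \<Rightarrow> ('m \<Rightarrow> 'm \<Rightarrow> 'm) \<Rightarrow> 'm \<Rightarrow> bool" where
  "profinite_monoid M m e \<longleftrightarrow>
     top_monoid M m e \<and> compact_space M \<and>
     (\<forall>x\<in>topspace M. \<forall>y\<in>topspace M. x \<noteq> y \<longrightarrow>
        (\<exists>K n u h. fin_monoid K n u \<and> continuous_map M (discrete_topology K) h \<and>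
                   mon_hom M m e (discrete_topology K) n u h \<and> h x \<noteq> h y))"

definition submonoid_gen :: "'m topology \<Rightarrow> ('m \<Rightarrow> 'm \<Rightarrow> 'm) \<Rightarrow> 'm \<Rightarrow> 'm set \<Rightarrow> 'm set" where
  "submonoid_gen M m e G = \<Inter>{S. S \<subseteq> topspace M \<and> G \<subseteq> S \<and> e \<in> S \<and>
        (\<forall>a\<in>S. \<forall>b\<in>S. m a b \<in> S)}"

definition free_profinite_monoid :: "'y topology \<Rightarrow>
     'm topology \<Rightarrow> ('m \<Rightarrow> 'm \<Rightarrow> 'm) \<Rightarrow> 'm \<Rightarrow> ('y \<Rightarrow> 'm) \<Rightarrow> bool" where
  "free_profinite_monoid Y M m e \<eta> \<longleftrightarrow>
     profinite_monoid M m e \<and> continuous_map Y M \<eta> \<and>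
     M closure_of (submonoid_gen M m e (\<eta> ` topspace Y)) = topspace M \<and>
     (\<forall>K n u \<phi>. fin_monoid K n u \<and> continuous_map Y (discrete_topology K) \<phi> \<longrightarrow>
        (\<exists>\<psi>. continuous_map M (discrete_topology K) \<psi> \<and>
              mon_hom M m e (discrete_topology K) n u \<psi> \<and>
              (\<forall>y\<in>topspace Y. \<psi> (\<eta> y) = \<phi> y) \<and>
              (\<forall>\<psi>'. continuous_map M (discrete_topology K) \<psi>' \<and>
                     mon_hom M m e (discrete_topology K) n u \<psi>' \<and>
                     (\<forall>y\<in>topspace Y. \<psi>' (\<eta> y) = \<phi> y) \<longrightarrow>
                     (\<forall>a\<in>topspace M. \<psi>' a = \<psi> a))))"

text \<open>The space X \<union> Omega = X + (Omega_0 + Omega_1).\<close>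
definition X_Omega_space :: "'x topology \<Rightarrow> 'c topology \<Rightarrow> 'u topology \<Rightarrow> ('x + ('c + 'u)) topology" where
  "X_Omega_space X T0 T1 = disjoint_union_topology X (disjoint_union_topology T0 T1)"

definition E0 :: "('x + ('c + 'u) \<Rightarrow> 'm) \<Rightarrow> 'c \<Rightarrow> 'm" where
  "E0 \<eta> w = \<eta> (Inr (Inl w))"

definition E1 :: "('m \<Rightarrow> 'm \<Rightarrow> 'm) \<Rightarrow> ('x + ('c + 'u) \<Rightarrow> 'm) \<Rightarrow> 'u \<Rightarrow> 'm \<Rightarrow> 'm" where
  "E1 m \<eta> w a = m (\<eta> (Inr (Inr w))) a"

definition S_M :: "'x topology \<Rightarrow> 'c topology \<Rightarrow> 'u topology \<Rightarrow>
     'm topology \<Rightarrow> ('m \<Rightarrow> 'm \<Rightarrow> 'm) \<Rightarrow> ('x + ('c + 'u) \<Rightarrow> 'm) \<Rightarrow> 'm set" where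
  "S_M X T0 T1 M m \<eta> = \<Inter>{S. closedin M S \<and> (\<lambda>x. \<eta> (Inl x)) ` topspace X \<subseteq> S \<and>
        (\<forall>w\<in>topspace T0. E0 \<eta> w \<in> S) \<and> (\<forall>w\<in>topspace T1. \<forall>a\<in>S. E1 m \<eta> w a \<in> S)}"

end

theory Submission
  imports Defs
begin

(* Phi is a continuous map from a compact space into a Hausdorff space, so it is enough to show
   that it is a bijection onto S_M.  Its image is compact, hence closed, and it is an
   Omega-subalgebra containing eta(X), so it contains S_M.
   For injectivity, let h : F -> K be a continuous homomorphism into a finite algebra (K, d, g).
   Sending x in X to the constant self-map of K with value h(iota x), a constant symbol c to the
   constant self-map with value d c, and a unary symbol w to g w extends, by freeness of M, to a
   continuous monoid homomorphism psi from M into the finite monoid of self-maps of K.  Since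
   E_1(w, u) = eta(w) u, for any fixed k0 in K the map a |-> psi(Phi a)(k0) is an
   Omega-homomorphism F -> K; it agrees with h on iota(X), so it is h by freeness of F.
   Hence h factors through Phi, and as the finite quotients of F separate its points, Phi is
   injective. *)

lemma continuous_map_into_discrete_topology_iff:
  "continuous_map X (discrete_topology K) f \<longleftrightarrow>
     f \<in> topspace X \<rightarrow> K \<and> (\<forall>k. openin X {x \<in> topspace X. f x = k})"
proof
  assume f: "continuous_map X (discrete_topology K) f"
  have "openin X {x \<in> topspace X. f x = k}" for k
  proof (cases "k \<in> K")
    case True
    then show ?thesis
      using openin_continuous_map_preimage[OF f, of "{k}"] by simp
  next
    case False
    then have "{x \<in> topspace X. f x = k} = {}"
      using continuous_map_funspace[OF f] by auto
    then show ?thesis by (simp only: openin_empty)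
  qed
  then show "f \<in> topspace X \<rightarrow> K \<and> (\<forall>k. openin X {x \<in> topspace X. f x = k})"
    using continuous_map_funspace[OF f] by simp
next
  assume f: "f \<in> topspace X \<rightarrow> K \<and> (\<forall>k. openin X {x \<in> topspace X. f x = k})"
  have "openin X {x \<in> topspace X. f x \<in> U}" for U
  proof -
    have "{x \<in> topspace X. f x \<in> U} = (\<Union>k\<in>U. {x \<in> topspace X. f x = k})" by auto
    then show ?thesis using f by auto
  qed
  then show "continuous_map X (discrete_topology K) f"
    using f by (simp add: continuous_map_def)
qed

lemma Hausdorff_space_if_separated_by_maps:
  assumes "\<And>x y. \<lbrakk>x \<in> topspace X; y \<in> topspace X; x \<noteq> y\<rbrakk> \<Longrightarrow>
             \<exists>(Y :: 'b topology) f. Hausdorff_space Y \<and> continuous_map X Y f \<and> f x \<noteq> f y"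
  shows "Hausdorff_space X"
  unfolding Hausdorff_space_def
proof (intro allI impI)
  fix x y assume xy: "x \<in> topspace X \<and> y \<in> topspace X \<and> x \<noteq> y"
  then obtain Y :: "'b topology" and f
    where Y: "Hausdorff_space Y" and f: "continuous_map X Y f" and "f x \<noteq> f y"
    using assms by blast
  moreover have "f x \<in> topspace Y" "f y \<in> topspace Y"
    using xy continuous_map_funspace[OF f] by auto
  ultimately obtain U V where UV: "openin Y U" "openin Y V" "f x \<in> U" "f y \<in> V" "disjnt U V"
    unfolding Hausdorff_space_def by blast
  show "\<exists>U V. openin X U \<and> openin X V \<and> x \<in> U \<and> y \<in> V \<and> disjnt U V"
    using xy UV openin_continuous_map_preimage[OF f]
    by (intro exI[of _ "{z \<in> topspace X. f z \<in> U}"] exI[of _ "{z \<in> topspace X. f z \<in> V}"])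
       (auto simp: disjnt_def)
qed

lemma continuous_map_curry_slice:
  assumes "continuous_map (prod_topology T Y) Z (\<lambda>(w, y). g w y)" and "y \<in> topspace Y"
  shows "continuous_map T Z (\<lambda>w. g w y)"
proof -
  have "continuous_map T (prod_topology T Y) (\<lambda>w. (w, y))"
    using assms(2) by (intro continuous_map_pairedI) (auto simp: continuous_map_id[unfolded id_def])
  from continuous_map_compose[OF this assms(1)] show ?thesis
    by (simp add: o_def)
qed

lemma openin_disjoint_union_topology:
  "openin (disjoint_union_topology X Y) U \<longleftrightarrow>
     U \<subseteq> Inl ` topspace X \<union> Inr ` topspace Y \<and> openin X (Inl -` U) \<and> openin Y (Inr -` U)"
  unfolding disjoint_union_topology_def
  by (simp add: istopology_disjoint_union2 topology_inverse')

lemma topspace_disjoint_union_topology [simp]: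
  "topspace (disjoint_union_topology X Y) = Inl ` topspace X \<union> Inr ` topspace Y"
proof
  show "topspace (disjoint_union_topology X Y) \<subseteq> Inl ` topspace X \<union> Inr ` topspace Y"
    using openin_disjoint_union_topology[of X Y "topspace (disjoint_union_topology X Y)"] by simp
  have "Inl -` (Inl ` topspace X \<union> Inr ` topspace Y) = topspace X"
    and "Inr -` (Inl ` topspace X \<union> Inr ` topspace Y) = topspace Y"
    by auto
  then have "openin (disjoint_union_topology X Y) (Inl ` topspace X \<union> Inr ` topspace Y)"
    by (simp add: openin_disjoint_union_topology)
  then show "Inl ` topspace X \<union> Inr ` topspace Y \<subseteq> topspace (disjoint_union_topology X Y)"
    by (rule openin_subset)
qed

lemma continuous_map_disjoint_union_topology:
  assumes "continuous_map X Z (\<lambda>x. f (Inl x))" and "continuous_map Y Z (\<lambda>y. f (Inr y))"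
  shows "continuous_map (disjoint_union_topology X Y) Z f"
  unfolding continuous_map_def
proof (intro conjI allI impI)
  show "f \<in> topspace (disjoint_union_topology X Y) \<rightarrow> topspace Z"
    using assms by (auto simp: continuous_map_def)
  fix U assume U: "openin Z U"
  let ?P = "{z \<in> topspace (disjoint_union_topology X Y). f z \<in> U}"
  have "Inl -` ?P = {x \<in> topspace X. f (Inl x) \<in> U}" "Inr -` ?P = {y \<in> topspace Y. f (Inr y) \<in> U}"
    by auto
  then show "openin (disjoint_union_topology X Y) ?P"
    using assms U unfolding openin_disjoint_union_topology continuous_map_def by auto
qed

lemma top_alg_const_in_topspace:
  "top_alg T0 T1 A c f \<Longrightarrow> w \<in> topspace T0 \<Longrightarrow> c w \<in> topspace A"
  unfolding top_alg_def using continuous_map_funspace by fastforce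

lemma top_alg_op_in_topspace:
  assumes "top_alg T0 T1 A c f" "w \<in> topspace T1" "a \<in> topspace A"
  shows "f w a \<in> topspace A"
proof -
  have "continuous_map (prod_topology T1 A) A (\<lambda>(w, a). f w a)"
    using assms(1) by (simp add: top_alg_def)
  from continuous_map_funspace[OF this] show ?thesis
    using assms(2,3) by (force simp: Pi_iff)
qed

lemma alg_hom_from_subtopology:
  "alg_hom T0 T1 A c f (subtopology B S) d g h \<Longrightarrow> alg_hom T0 T1 A c f B d g h"
  by (simp add: alg_hom_def)

section \<open>The finite monoid of self-maps of a finite set\<close>

(* The carrier of a member of Fin_Omega must be a set of naturals, so the finite monoid of
   self-maps of K is represented by codes; maps are normalised to the identity outside K so that
   there are only finitely many of them. *)
definition self_maps :: "'k set \<Rightarrow> ('k \<Rightarrow> 'k) set" where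
  "self_maps K = {f. f \<in> K \<rightarrow> K \<and> (\<forall>k. k \<notin> K \<longrightarrow> f k = k)}"

definition extend_id :: "'k set \<Rightarrow> ('k \<Rightarrow> 'k) \<Rightarrow> 'k \<Rightarrow> 'k" where
  "extend_id K f k = (if k \<in> K then f k else k)"

definition self_map_code :: "'k set \<Rightarrow> ('k \<Rightarrow> 'k) \<Rightarrow> nat" where
  "self_map_code K = to_nat_on (self_maps K)"

definition self_map_decode :: "'k set \<Rightarrow> nat \<Rightarrow> 'k \<Rightarrow> 'k" where
  "self_map_decode K = from_nat_into (self_maps K)"

definition self_map_codes :: "'k set \<Rightarrow> nat set" where
  "self_map_codes K = self_map_code K ` self_maps K"

definition self_map_mult :: "'k set \<Rightarrow> nat \<Rightarrow> nat \<Rightarrow> nat" where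
  "self_map_mult K a b = self_map_code K (self_map_decode K a \<circ> self_map_decode K b)"

lemma extend_id_in_self_maps: "f \<in> K \<rightarrow> K \<Longrightarrow> extend_id K f \<in> self_maps K"
  by (auto simp: self_maps_def extend_id_def)

lemma id_in_self_maps: "id \<in> self_maps K"
  by (simp add: self_maps_def)

lemma comp_in_self_maps: "f \<in> self_maps K \<Longrightarrow> g \<in> self_maps K \<Longrightarrow> f \<circ> g \<in> self_maps K"
  by (auto simp: self_maps_def)

lemma finite_self_maps:
  assumes "finite K"
  shows "finite (self_maps K)"
proof -
  have "self_maps K \<subseteq> extend_id K ` (K \<rightarrow>\<^sub>E K)"
  proof
    fix f assume f: "f \<in> self_maps K"
    then have "f = extend_id K (restrict f K)"
      by (auto simp: self_maps_def extend_id_def)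
    moreover have "restrict f K \<in> K \<rightarrow>\<^sub>E K"
      using f by (auto simp: self_maps_def)
    ultimately show "f \<in> extend_id K ` (K \<rightarrow>\<^sub>E K)" by blast
  qed
  then show ?thesis
    using assms by (meson finite_PiE finite_imageI finite_subset)
qed

lemma self_map_decode_code:
  "finite K \<Longrightarrow> f \<in> self_maps K \<Longrightarrow> self_map_decode K (self_map_code K f) = f"
  by (simp add: self_map_decode_def self_map_code_def countable_finite finite_self_maps)

lemma self_map_decode_in_self_maps: "self_map_decode K n \<in> self_maps K"
  unfolding self_map_decode_def using id_in_self_maps by (metis empty_iff from_nat_into)

lemma self_map_mult_code:
  "finite K \<Longrightarrow> f \<in> self_maps K \<Longrightarrow> g \<in> self_maps K \<Longrightarrow>
     self_map_mult K (self_map_code K f) (self_map_code K g) = self_map_code K (f \<circ> g)"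
  by (simp add: self_map_mult_def self_map_decode_code)

lemma fin_monoid_self_maps:
  assumes K: "finite K"
  shows "fin_monoid (self_map_codes K) (self_map_mult K) (self_map_code K id)"
  unfolding fin_monoid_def top_monoid_def self_map_codes_def
proof (intro conjI ballI)
  show "finite (self_map_code K ` self_maps K)"
    using finite_self_maps[OF K] by simp
  show "self_map_code K id \<in> topspace (discrete_topology (self_map_code K ` self_maps K))"
    using id_in_self_maps[of K] by simp
  show "continuous_map
          (prod_topology (discrete_topology (self_map_code K ` self_maps K))
                         (discrete_topology (self_map_code K ` self_maps K)))
          (discrete_topology (self_map_code K ` self_maps K)) (\<lambda>(a, b). self_map_mult K a b)"
    unfolding prod_topology_discrete_topology[symmetric]
    using K by (auto simp: self_map_mult_code comp_in_self_maps)
  fix a b c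
  assume "a \<in> topspace (discrete_topology (self_map_code K ` self_maps K))"
    and "b \<in> topspace (discrete_topology (self_map_code K ` self_maps K))"
    and "c \<in> topspace (discrete_topology (self_map_code K ` self_maps K))"
  then show "self_map_mult K (self_map_mult K a b) c = self_map_mult K a (self_map_mult K b c)"
    using K by (auto simp: self_map_mult_code comp_in_self_maps o_assoc)
next
  fix a assume "a \<in> topspace (discrete_topology (self_map_code K ` self_maps K))"
  then show "self_map_mult K (self_map_code K id) a = a"
    and "self_map_mult K a (self_map_code K id) = a"
    using K by (auto simp: self_map_mult_code id_in_self_maps)
qed

lemma self_map_code_extend_id_eq_iff:
  assumes K: "finite K" and h: "h \<in> K \<rightarrow> K" and f: "f \<in> self_maps K"
  shows "self_map_code K (extend_id K h) = self_map_code K f \<longleftrightarrow> (\<forall>k\<in>K. h k = f k)"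
proof -
  have "self_map_code K (extend_id K h) = self_map_code K f \<longleftrightarrow> extend_id K h = f"
    using f self_map_decode_code[OF K] extend_id_in_self_maps[OF h] by metis
  also have "\<dots> \<longleftrightarrow> (\<forall>k\<in>K. h k = f k)"
    using f by (auto simp: extend_id_def self_maps_def fun_eq_iff)
  finally show ?thesis .
qed

lemma continuous_map_self_map_code_curry:
  assumes K: "finite K"
    and g: "continuous_map (prod_topology T (discrete_topology K)) (discrete_topology K) (\<lambda>(w, k). g w k)"
  shows "continuous_map T (discrete_topology (self_map_codes K)) (\<lambda>w. self_map_code K (extend_id K (g w)))"
proof -
  have g_slice: "continuous_map T (discrete_topology K) (\<lambda>w. g w k)" if "k \<in> K" for k
    using continuous_map_curry_slice[OF g] that by simp
  then have g_in: "g w \<in> K \<rightarrow> K" if "w \<in> topspace T" for w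
    using that continuous_map_funspace by fastforce
  have code_in: "self_map_code K (extend_id K (g w)) \<in> self_map_codes K" if "w \<in> topspace T" for w
    unfolding self_map_codes_def using extend_id_in_self_maps[OF g_in[OF that]] by (rule imageI)
  have "openin T {w \<in> topspace T. self_map_code K (extend_id K (g w)) = n}" for n
  proof (cases "n \<in> self_map_codes K")
    case False
    then have "{w \<in> topspace T. self_map_code K (extend_id K (g w)) = n} = {}"
      using code_in by auto
    then show ?thesis by (simp only: openin_empty)
  next
    case True
    then obtain f where f: "f \<in> self_maps K" "n = self_map_code K f"
      by (auto simp: self_map_codes_def)
    have fiber: "self_map_code K (extend_id K (g w)) = n \<longleftrightarrow> (\<forall>k\<in>K. g w k = f k)"
      if "w \<in> topspace T" for w
      using self_map_code_extend_id_eq_iff[OF K g_in[OF that] f(1)] f(2) by simp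
    have "openin T ((\<Inter>k\<in>K. {w \<in> topspace T. g w k = f k}) \<inter> topspace T)"
      using K g_slice by (intro openin_INT) (simp_all add: continuous_map_into_discrete_topology_iff)
    moreover have "{w \<in> topspace T. self_map_code K (extend_id K (g w)) = n}
                   = (\<Inter>k\<in>K. {w \<in> topspace T. g w k = f k}) \<inter> topspace T"
      using fiber by auto
    ultimately show ?thesis by simp
  qed
  then show ?thesis
    using code_in by (simp add: continuous_map_into_discrete_topology_iff)
qed

lemma profinite_monoid_imp_Hausdorff_space:
  assumes "profinite_monoid M m e"
  shows "Hausdorff_space M"
proof (rule Hausdorff_space_if_separated_by_maps[where 'b = nat])
  fix x y assume "x \<in> topspace M" "y \<in> topspace M" "x \<noteq> y"
  then obtain K :: "nat set" and h
    where "continuous_map M (discrete_topology K) h" "h x \<noteq> h y"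
    using assms unfolding profinite_monoid_def by blast
  then show "\<exists>(Y :: nat topology) f. Hausdorff_space Y \<and> continuous_map M Y f \<and> f x \<noteq> f y"
    using Hausdorff_space_discrete_topology by blast
qed

lemma free_profinite_alg_hom_eqI:
  assumes free: "free_profinite_alg T0 T1 X A c f \<iota>" and K: "fin_alg T0 T1 K d g"
    and h1: "continuous_map A (discrete_topology K) h1" "alg_hom T0 T1 A c f (discrete_topology K) d g h1"
    and h2: "continuous_map A (discrete_topology K) h2" "alg_hom T0 T1 A c f (discrete_topology K) d g h2"
    and agree: "\<forall>x\<in>topspace X. h1 (\<iota> x) = h2 (\<iota> x)" and a: "a \<in> topspace A"
  shows "h1 a = h2 a"
proof -
  have "continuous_map X A \<iota>"
    using free by (simp add: free_profinite_alg_def)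
  from continuous_map_compose[OF this h1(1)]
  obtain \<psi> where unique: "\<forall>\<psi>'. continuous_map A (discrete_topology K) \<psi>' \<and>
                     alg_hom T0 T1 A c f (discrete_topology K) d g \<psi>' \<and>
                     (\<forall>x\<in>topspace X. \<psi>' (\<iota> x) = (h1 \<circ> \<iota>) x) \<longrightarrow> (\<forall>a\<in>topspace A. \<psi>' a = \<psi> a)"
    using free K unfolding free_profinite_alg_def by blast
  have "h1 a = \<psi> a"
    using unique[rule_format, of h1] h1 a by simp
  moreover have "h2 a = \<psi> a"
    using unique[rule_format, of h2] h2 agree a by simp
  ultimately show ?thesis by simp
qed

lemma free_profinite_monoid_extend:
  assumes "free_profinite_monoid Y M m e \<eta>" and "fin_monoid K n u"
    and "continuous_map Y (discrete_topology K) \<phi>"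
  obtains \<psi> where "continuous_map M (discrete_topology K) \<psi>"
    and "mon_hom M m e (discrete_topology K) n u \<psi>" and "\<forall>y\<in>topspace Y. \<psi> (\<eta> y) = \<phi> y"
  using assms(1)[unfolded free_profinite_monoid_def, THEN conjunct2, THEN conjunct2, THEN conjunct2,
                 rule_format, OF conjI[OF assms(2,3)]]
  by blast

section \<open>The Polish representation\<close>

definition action_assignment ::
    "'k set \<Rightarrow> ('c \<Rightarrow> 'k) \<Rightarrow> ('u \<Rightarrow> 'k \<Rightarrow> 'k) \<Rightarrow> ('x \<Rightarrow> 'k) \<Rightarrow> 'x + ('c + 'u) \<Rightarrow> nat" where
  "action_assignment K d g \<theta> =
     case_sum (\<lambda>x. self_map_code K (extend_id K (\<lambda>_. \<theta> x)))
       (case_sum (\<lambda>w. self_map_code K (extend_id K (\<lambda>_. d w)))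
                 (\<lambda>w. self_map_code K (extend_id K (g w))))"

lemma continuous_map_action_assignment:
  assumes K: "fin_alg T0 T1 K d g" and \<theta>: "continuous_map X (discrete_topology K) \<theta>"
  shows "continuous_map (X_Omega_space X T0 T1) (discrete_topology (self_map_codes K))
           (action_assignment K d g \<theta>)"
proof -
  have fin: "finite K" and d: "continuous_map T0 (discrete_topology K) d"
    and g: "continuous_map (prod_topology T1 (discrete_topology K)) (discrete_topology K) (\<lambda>(w, k). g w k)"
    using K by (auto simp: fin_alg_def top_alg_def)
  have const: "continuous_map (discrete_topology K) (discrete_topology (self_map_codes K))
                 (\<lambda>k. self_map_code K (extend_id K (\<lambda>_. k)))"
    by (auto simp: self_map_codes_def intro!: extend_id_in_self_maps)
  show ?thesis
    unfolding X_Omega_space_def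
    by (intro continuous_map_disjoint_union_topology)
       (simp_all add: action_assignment_def continuous_map_self_map_code_curry[OF fin g]
          continuous_map_compose[OF \<theta> const, unfolded o_def]
          continuous_map_compose[OF d const, unfolded o_def])
qed

lemma alg_hom_evaluate_action:
  assumes K: "fin_alg T0 T1 K d g" and k0: "k0 \<in> K"
    and \<eta>: "continuous_map (X_Omega_space X T0 T1) M \<eta>"
    and \<Phi>: "alg_hom T0 T1 A c f M (E0 \<eta>) (E1 m \<eta>) \<Phi>"
    and \<psi>: "mon_hom M m e (discrete_topology (self_map_codes K)) (self_map_mult K) (self_map_code K id) \<psi>"
    and \<psi>_\<eta>: "\<forall>y\<in>topspace (X_Omega_space X T0 T1). \<psi> (\<eta> y) = action_assignment K d g \<theta> y"
  shows "alg_hom T0 T1 A c f (discrete_topology K) d g (\<lambda>a. self_map_decode K (\<psi> (\<Phi> a)) k0)"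
proof -
  have fin: "finite K" and alg_K: "top_alg T0 T1 (discrete_topology K) d g"
    using K by (simp_all add: fin_alg_def)
  have decode_k0: "self_map_decode K n k0 \<in> K" for n
    using self_map_decode_in_self_maps[of K n] k0 by (auto simp: self_maps_def)
  show ?thesis
    unfolding alg_hom_def
  proof (intro conjI ballI)
    fix a assume "a \<in> topspace A"
    show "self_map_decode K (\<psi> (\<Phi> a)) k0 \<in> topspace (discrete_topology K)"
      using decode_k0 by simp
  next
    fix w assume w: "w \<in> topspace T0"
    then have "\<psi> (\<Phi> (c w)) = self_map_code K (extend_id K (\<lambda>_. d w))"
      using \<Phi> \<psi>_\<eta> by (simp add: alg_hom_def E0_def action_assignment_def X_Omega_space_def)
    then show "self_map_decode K (\<psi> (\<Phi> (c w))) k0 = d w"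
      using self_map_decode_code[OF fin extend_id_in_self_maps] k0 top_alg_const_in_topspace[OF alg_K w]
      by (simp add: extend_id_def)
  next
    fix w a assume w: "w \<in> topspace T1" and a: "a \<in> topspace A"
    let ?u = "self_map_decode K (\<psi> (\<Phi> a))"
    have g_w: "g w \<in> K \<rightarrow> K"
      using top_alg_op_in_topspace[OF alg_K w] by simp
    have "\<eta> (Inr (Inr w)) \<in> topspace M"
      using \<eta> w continuous_map_funspace by (fastforce simp: X_Omega_space_def)
    then have "\<psi> (\<Phi> (f w a)) = self_map_mult K (\<psi> (\<eta> (Inr (Inr w)))) (\<psi> (\<Phi> a))"
      using \<Phi> \<psi> w a by (simp add: alg_hom_def mon_hom_def E1_def)
    also have "\<dots> = self_map_code K (extend_id K (g w) \<circ> ?u)"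
      using \<psi>_\<eta> w self_map_decode_code[OF fin extend_id_in_self_maps[OF g_w]]
      by (simp add: self_map_mult_def action_assignment_def X_Omega_space_def)
    finally have "self_map_decode K (\<psi> (\<Phi> (f w a))) = extend_id K (g w) \<circ> ?u"
      using self_map_decode_code[OF fin comp_in_self_maps[OF extend_id_in_self_maps[OF g_w]
              self_map_decode_in_self_maps]] by simp
    then show "self_map_decode K (\<psi> (\<Phi> (f w a))) k0 = g w (?u k0)"
      using decode_k0 by (simp add: extend_id_def)
  qed
qed

lemma S_M_subset:
  assumes "closedin M C" and "(\<lambda>x. \<eta> (Inl x)) ` topspace X \<subseteq> C"
    and "\<forall>w\<in>topspace T0. E0 \<eta> w \<in> C" and "\<forall>w\<in>topspace T1. \<forall>a\<in>C. E1 m \<eta> w a \<in> C"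
  shows "S_M X T0 T1 M m \<eta> \<subseteq> C"
  unfolding S_M_def using assms by (intro Inter_lower) simp

lemma S_M_subset_image:
  assumes A: "top_alg T0 T1 A c f" "compact_space A" and M: "Hausdorff_space M"
    and \<iota>: "\<iota> \<in> topspace X \<rightarrow> topspace A"
    and \<Phi>: "continuous_map A M \<Phi>" "alg_hom T0 T1 A c f M (E0 \<eta>) (E1 m \<eta>) \<Phi>"
    and \<Phi>_\<iota>: "\<forall>x\<in>topspace X. \<Phi> (\<iota> x) = \<eta> (Inl x)"
  shows "S_M X T0 T1 M m \<eta> \<subseteq> \<Phi> ` topspace A"
proof (rule S_M_subset)
  show "closedin M (\<Phi> ` topspace A)"
    using compactin_imp_closedin[OF M image_compactin[OF _ \<Phi>(1)]] A(2)
    by (simp add: compact_space_def)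
  show "(\<lambda>x. \<eta> (Inl x)) ` topspace X \<subseteq> \<Phi> ` topspace A"
  proof (rule image_subsetI)
    fix x assume "x \<in> topspace X"
    then show "\<eta> (Inl x) \<in> \<Phi> ` topspace A"
      using \<iota> \<Phi>_\<iota> by (metis PiE image_eqI)
  qed
  have hom0: "\<Phi> (c w) = E0 \<eta> w" if "w \<in> topspace T0" for w
    using \<Phi>(2) that by (simp add: alg_hom_def)
  have hom1: "\<Phi> (f w a) = E1 m \<eta> w (\<Phi> a)" if "w \<in> topspace T1" "a \<in> topspace A" for w a
    using \<Phi>(2) that by (simp add: alg_hom_def)
  show "\<forall>w\<in>topspace T0. E0 \<eta> w \<in> \<Phi> ` topspace A"
    using hom0 top_alg_const_in_topspace[OF A(1)] by (metis image_eqI)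
  show "\<forall>w\<in>topspace T1. \<forall>a\<in>\<Phi> ` topspace A. E1 m \<eta> w a \<in> \<Phi> ` topspace A"
    using hom1 top_alg_op_in_topspace[OF A(1)] by (metis image_eqI imageE)
qed

lemma Polish_rep_eq_imp_fin_hom_eq:
  assumes free_alg: "free_profinite_alg T0 T1 X F cF fF \<iota>"
    and free_mon: "free_profinite_monoid (X_Omega_space X T0 T1) M m e \<eta>"
    and \<Phi>: "continuous_map F M \<Phi>" "alg_hom T0 T1 F cF fF M (E0 \<eta>) (E1 m \<eta>) \<Phi>"
    and \<Phi>_\<iota>: "\<forall>x\<in>topspace X. \<Phi> (\<iota> x) = \<eta> (Inl x)"
    and K: "fin_alg T0 T1 K d g"
    and h: "continuous_map F (discrete_topology K) h" "alg_hom T0 T1 F cF fF (discrete_topology K) d g h"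
    and ab: "a \<in> topspace F" "b \<in> topspace F" "\<Phi> a = \<Phi> b"
  shows "h a = h b"
proof -
  have fin: "finite K"
    using K by (simp add: fin_alg_def)
  have \<iota>: "continuous_map X F \<iota>"
    using free_alg by (simp add: free_profinite_alg_def)
  have \<eta>: "continuous_map (X_Omega_space X T0 T1) M \<eta>"
    using free_mon by (simp add: free_profinite_monoid_def)
  have h_in: "h z \<in> K" if "z \<in> topspace F" for z
    using h(1) that continuous_map_funspace by fastforce
  have \<theta>: "continuous_map X (discrete_topology K) (h \<circ> \<iota>)"
    using \<iota> h(1) by (rule continuous_map_compose)
  obtain \<psi> where \<psi>: "continuous_map M (discrete_topology (self_map_codes K)) \<psi>"
      "mon_hom M m e (discrete_topology (self_map_codes K)) (self_map_mult K) (self_map_code K id) \<psi>"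
      "\<forall>y\<in>topspace (X_Omega_space X T0 T1). \<psi> (\<eta> y) = action_assignment K d g (h \<circ> \<iota>) y"
    using free_profinite_monoid_extend[OF free_mon fin_monoid_self_maps[OF fin]
            continuous_map_action_assignment[OF K \<theta>]] .
  define H where "H z = self_map_decode K (\<psi> (\<Phi> z)) (h a)" for z
  have decode_cont: "continuous_map (discrete_topology (self_map_codes K)) (discrete_topology K)
                       (\<lambda>n. self_map_decode K n (h a))"
    using self_map_decode_in_self_maps[of K] h_in[OF ab(1)] by (auto simp: self_maps_def Pi_iff)
  have H_cont: "continuous_map F (discrete_topology K) H"
    unfolding H_def using continuous_map_compose[OF continuous_map_compose[OF \<Phi>(1) \<psi>(1)] decode_cont]
    by (simp add: o_def)
  have H_hom: "alg_hom T0 T1 F cF fF (discrete_topology K) d g H"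
    unfolding H_def using K h_in[OF ab(1)] \<eta> \<Phi>(2) \<psi>(2,3) by (rule alg_hom_evaluate_action)
  have "h (\<iota> x) = H (\<iota> x)" if x: "x \<in> topspace X" for x
  proof -
    have "\<psi> (\<Phi> (\<iota> x)) = self_map_code K (extend_id K (\<lambda>_. h (\<iota> x)))"
      using x \<Phi>_\<iota> \<psi>(3) by (simp add: action_assignment_def X_Omega_space_def)
    moreover have "\<iota> x \<in> topspace F"
      using x \<iota> continuous_map_funspace by fastforce
    ultimately show ?thesis
      using h_in ab(1) self_map_decode_code[OF fin extend_id_in_self_maps]
      by (simp add: H_def extend_id_def)
  qed
  then have "h z = H z" if "z \<in> topspace F" for z
    using free_profinite_alg_hom_eqI[OF free_alg K h H_cont H_hom _ that] by blast
  moreover have "H a = H b"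
    using ab(3) by (simp add: H_def)
  ultimately show ?thesis
    using ab(1,2) by simp
qed

lemma inj_on_Polish_rep:
  assumes free_alg: "free_profinite_alg T0 T1 X F cF fF \<iota>"
    and free_mon: "free_profinite_monoid (X_Omega_space X T0 T1) M m e \<eta>"
    and \<Phi>: "continuous_map F M \<Phi>" "alg_hom T0 T1 F cF fF M (E0 \<eta>) (E1 m \<eta>) \<Phi>"
    and \<Phi>_\<iota>: "\<forall>x\<in>topspace X. \<Phi> (\<iota> x) = \<eta> (Inl x)"
  shows "inj_on \<Phi> (topspace F)"
proof (rule inj_onI, rule ccontr)
  fix a b assume ab: "a \<in> topspace F" "b \<in> topspace F" "\<Phi> a = \<Phi> b" "a \<noteq> b"
  then obtain K d g h where "fin_alg T0 T1 K d g" "continuous_map F (discrete_topology K) h"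
      "alg_hom T0 T1 F cF fF (discrete_topology K) d g h" "h a \<noteq> h b"
    using free_alg[unfolded free_profinite_alg_def profinite_alg_def, THEN conjunct1,
                   THEN conjunct2, THEN conjunct2, rule_format, OF ab(1,2,4)]
    by blast
  then show False
    using Polish_rep_eq_imp_fin_hom_eq[OF assms _ _ _ ab(1-3)] by blast
qed

theorem theorem4p15:
  fixes X :: "'x topology" and T0 :: "'c topology" and T1 :: "'u topology"
    and F :: "'a topology" and cF :: "'c \<Rightarrow> 'a" and fF :: "'u \<Rightarrow> 'a \<Rightarrow> 'a" and \<iota> :: "'x \<Rightarrow> 'a"
    and M :: "'m topology" and m :: "'m \<Rightarrow> 'm \<Rightarrow> 'm" and e :: 'm
    and \<eta> :: "'x + ('c + 'u) \<Rightarrow> 'm"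
    and \<Phi> :: "'a \<Rightarrow> 'm"
  assumes free_alg: "free_profinite_alg T0 T1 X F cF fF \<iota>"
    and free_mon: "free_profinite_monoid (X_Omega_space X T0 T1) M m e \<eta>"
    and Phi_cont: "continuous_map F (subtopology M (S_M X T0 T1 M m \<eta>)) \<Phi>"
    and Phi_hom: "alg_hom T0 T1 F cF fF (subtopology M (S_M X T0 T1 M m \<eta>)) (E0 \<eta>) (E1 m \<eta>) \<Phi>"
    and Phi_iota: "\<forall>x\<in>topspace X. \<Phi> (\<iota> x) = \<eta> (Inl x)"
  shows "top_alg_iso T0 T1 F cF fF (subtopology M (S_M X T0 T1 M m \<eta>)) (E0 \<eta>) (E1 m \<eta>) \<Phi>"
proof -
  let ?S = "S_M X T0 T1 M m \<eta>"
  have F: "top_alg T0 T1 F cF fF" "compact_space F" "continuous_map X F \<iota>"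
    using free_alg by (simp_all add: free_profinite_alg_def profinite_alg_def)
  have M: "Hausdorff_space M"
    using free_mon unfolding free_profinite_monoid_def by (blast intro: profinite_monoid_imp_Hausdorff_space)
  have \<Phi>: "continuous_map F M \<Phi>" "alg_hom T0 T1 F cF fF M (E0 \<eta>) (E1 m \<eta>) \<Phi>"
    using Phi_cont alg_hom_from_subtopology[OF Phi_hom] by (simp_all add: continuous_map_in_subtopology)
  have "?S \<subseteq> \<Phi> ` topspace F"
    using S_M_subset_image[OF F(1,2) M continuous_map_funspace[OF F(3)] \<Phi> Phi_iota] .
  then have onto: "\<Phi> ` topspace F = topspace (subtopology M ?S)"
    using continuous_map_image_subset_topspace[OF Phi_cont] by auto
  have "inj_on \<Phi> (topspace F)"
    using free_alg free_mon \<Phi> Phi_iota by (rule inj_on_Polish_rep)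
  then have "homeomorphic_map F (subtopology M ?S) \<Phi>"
    using continuous_imp_homeomorphic_map[OF Phi_cont F(2) Hausdorff_space_subtopology[OF M] onto]
    by simp
  then show ?thesis
    using Phi_hom by (simp add: top_alg_iso_def)
qed

end
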